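(* Let $g\ge1$, $n=g+1$, $k\in\{1,\dots,g\}$, $\kappa_1,\dots,\kappa_n\in\mathbb C$ pairwise distinct, $\beta_1,\dots,\beta_g\in\mathbb C^*$, $\beta_0:=1$, $I_k=\{1,\dots,k\}$, and let $A$ be the $k\times n$ matrix with $A_{ij}=\delta_{ij}$ for $j\le k$ and $A_{ij}=\frac{\beta_{i-1}}{\beta_{j-1}(\kappa_j-\kappa_i)^2}\prod_{l\in I_k,l\ne i}\frac{\kappa_i-\kappa_l}{\kappa_j-\kappa_l}$ for $i\le k<j$. Then the matroid of $A$ (whose bases are the $k$-subsets $J\subset[n]$ with nonzero maximal minor $A_J$) is $\mathcal M_{\bar{\mathbf a},v_1}$.
   Context: $B\in\mathbb Z^{g\times n}$ has $B_{i,1}=1$, $B_{i,i+1}=-1$, other entries $0$; $Q=BB^T$. $\bar{\mathbf a}\in\mathbb R^g$ has its first $k-1$ entries equal to $\tfrac{g+1-k}{g+1}$ and the remaining $g+1-k$ entries equal to $-\tfrac{k}{g+1}$ (a vertex of the Voronoi polytope of $Q$). $\mathcal D_{\bar{\mathbf a},Q}=\{\mathbf c\in\mathbb Z^g:\bar{\mathbf a}^TQ\bar{\mathbf a}=(\bar{\mathbf a}-\mathbf c)^TQ(\bar{\mathbf a}-\mathbf c)\}$. $\mathbf s_{\bar{\mathbf a}}\in\{0,1\}^n$ has $j$-th entry $0$ if $(B^T\bar{\mathbf a})_j>0$ and $1$ if $(B^T\bar{\mathbf a})_j<0$. The matroid $\mathcal M_{\bar{\mathbf a},v_1}$ on $[n]$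 has bases $\{I\subset[n],|I|=k:\exists\mathbf c\in\mathcal D_{\bar{\mathbf a},Q}\text{ with }(B^T\mathbf c+\mathbf s_{\bar{\mathbf a}})_i=1\ \forall i\in I\}$. *)

theory Defs
  imports Complex_Main "Jordan_Normal_Form.Determinant"
begin

(* All vectors/matrices are 1-based functions on nat; only indices in the stated ranges matter. *)

definition Bmat :: "nat \<Rightarrow> nat \<Rightarrow> nat \<Rightarrow> int" where
  "Bmat g i j = (if j = 1 then 1 else if j = i + 1 then -1 else 0)"

definition Qmat :: "nat \<Rightarrow> nat \<Rightarrow> nat \<Rightarrow> int" where
  "Qmat g i i' = (\<Sum>j=1..g+1. Bmat g i j * Bmat g i' j)"

definition qform :: "nat \<Rightarrow> (nat \<Rightarrow> real) \<Rightarrow> real" where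
  "qform g x = (\<Sum>i=1..g. \<Sum>i'=1..g. x i * of_int (Qmat g i i') * x i')"

definition abar :: "nat \<Rightarrow> nat \<Rightarrow> nat \<Rightarrow> real" where
  "abar g k i = (if i \<le> k - 1 then (real g + 1 - real k) / (real g + 1) else - real k / (real g + 1))"

definition Dset :: "nat \<Rightarrow> (nat \<Rightarrow> real) \<Rightarrow> (nat \<Rightarrow> int) set" where
  "Dset g a = {c. (\<forall>i. i \<notin> {1..g} \<longrightarrow> c i = 0) \<and>
                  qform g a = qform g (\<lambda>i. a i - of_int (c i))}"

definition BT_real :: "nat \<Rightarrow> (nat \<Rightarrow> real) \<Rightarrow> nat \<Rightarrow> real" where
  "BT_real g x j = (\<Sum>i=1..g. of_int (Bmat g i j) * x i)"

definition BT_int :: "nat \<Rightarrow> (nat \<Rightarrow> int) \<Rightarrow> nat \<Rightarrow> int" where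
  "BT_int g c j = (\<Sum>i=1..g. Bmat g i j * c i)"

(* s_a: j-th entry 0 if (B^T a)_j > 0 and 1 if (B^T a)_j < 0
   (the value 0 is never attained for a = abar) *)
definition svec :: "nat \<Rightarrow> (nat \<Rightarrow> real) \<Rightarrow> nat \<Rightarrow> int" where
  "svec g a j = (if BT_real g a j < 0 then 1 else 0)"

definition M_bases :: "nat \<Rightarrow> nat \<Rightarrow> (nat \<Rightarrow> real) \<Rightarrow> nat set set" where
  "M_bases g k a = {I. I \<subseteq> {1..g+1} \<and> card I = k \<and>
      (\<exists>c \<in> Dset g a. \<forall>i \<in> I. BT_int g c i + svec g a i = 1)}"

definition Amat :: "nat \<Rightarrow> (nat \<Rightarrow> complex) \<Rightarrow> (nat \<Rightarrow> complex) \<Rightarrow> nat \<Rightarrow> nat \<Rightarrow> complex" where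
  "Amat k \<kappa> \<beta> i j =
     (let b = (\<lambda>m. if m = 0 then 1 else \<beta> m) in
      if j \<le> k then (if i = j then 1 else 0)
      else b (i - 1) / (b (j - 1) * (\<kappa> j - \<kappa> i)^2) *
           (\<Prod>l\<in>{1..k} - {i}. (\<kappa> i - \<kappa> l) / (\<kappa> j - \<kappa> l)))"

definition minor_mat :: "nat \<Rightarrow> (nat \<Rightarrow> nat \<Rightarrow> complex) \<Rightarrow> nat set \<Rightarrow> complex mat" where
  "minor_mat k A J = mat k k (\<lambda>(r, c). A (r + 1) (sorted_list_of_set J ! c))"

definition matrix_matroid_bases :: "nat \<Rightarrow> nat \<Rightarrow> (nat \<Rightarrow> nat \<Rightarrow> complex) \<Rightarrow> nat set set" where
  "matrix_matroid_bases k n A = {J. J \<subseteq> {1..n} \<and> card J = k \<and> det (minor_mat k A J) \<noteq> 0}"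

end

theory Submission
  imports Defs "HOL-Computational_Algebra.Polynomial"
begin

(*
  Both matroids are the uniform matroid of rank k on {1..g+1}.

  Since Q = B B^T, the quadratic form is the squared norm of B^T x, and B^T abar = k/(g+1) - 1_[k].
  For a k-subset I, the vector 1_I - 1_[k] has coordinate sum zero and hence equals B^T c for an
  integer c; then B^T (abar - c) = k/(g+1) - 1_I has the same norm as B^T abar, so c lies in D and
  witnesses that I is a basis.

  The matrix A is (Id | C) with C a Cauchy matrix 1/(kappa_j - kappa_i) rescaled by nonzero row and
  column factors. A kernel vector u of a maximal submatrix would give sum_t u_t / (kappa_t - y) = 0 at
  the points y = kappa_s of the identity columns not chosen, of which there are at least as many as
  chosen Cauchy columns t; clearing denominators gives a polynomial of too small degree with that many
  roots, which forces u = 0. Hence every maximal minor of A is nonzero.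
*)

lemma qform_eq_sum_BT_real_sq: "qform g x = (\<Sum>j=1..g+1. (BT_real g x j)\<^sup>2)"
proof -
  let ?F = "\<lambda>i i' j. x i * of_int (Bmat g i j) * of_int (Bmat g i' j) * x i'"
  have "(\<Sum>j=1..g+1. (BT_real g x j)\<^sup>2) = (\<Sum>j=1..g+1. \<Sum>i=1..g. \<Sum>i'=1..g. ?F i i' j)"
    unfolding BT_real_def power2_eq_square by (simp add: sum_product mult_ac)
  also have "\<dots> = (\<Sum>i=1..g. \<Sum>i'=1..g. \<Sum>j=1..g+1. ?F i i' j)"
    by (subst sum.swap) (intro sum.cong refl sum.swap)
  also have "\<dots> = qform g x"
    unfolding qform_def Qmat_def of_int_sum sum_distrib_left sum_distrib_right
    by (intro sum.cong refl) (simp add: mult_ac)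
  finally show ?thesis by simp
qed

lemma BT_real_diff:
  "BT_real g (\<lambda>i. x i - y i) j = BT_real g x j - BT_real g y j"
  unfolding BT_real_def by (simp add: sum_subtractf algebra_simps)

lemma BT_real_of_int: "BT_real g (\<lambda>i. of_int (c i)) j = of_int (BT_int g c j)"
  unfolding BT_real_def BT_int_def by simp

lemma BT_real_1: "BT_real g x 1 = (\<Sum>i=1..g. x i)"
  unfolding BT_real_def Bmat_def by simp

lemma BT_real_Suc:
  assumes "i \<in> {1..g}" shows "BT_real g x (Suc i) = - x i"
proof -
  have "BT_real g x (Suc i) = (\<Sum>i'=1..g. if i' = i then - x i' else 0)"
    unfolding BT_real_def Bmat_def using assms by (intro sum.cong) auto
  then show ?thesis using assms by simp
qed

lemma BT_int_1: "BT_int g c 1 = (\<Sum>i=1..g. c i)"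
  using BT_real_1[of g "\<lambda>i. of_int (c i)"] unfolding BT_real_of_int of_int_sum[symmetric] of_int_eq_iff .

lemma BT_int_Suc:
  assumes "i \<in> {1..g}" shows "BT_int g c (Suc i) = - c i"
  using BT_real_Suc[OF assms, of "\<lambda>i. of_int (c i)"]
  unfolding BT_real_of_int of_int_minus[symmetric] of_int_eq_iff .

lemma BT_int_preimage:
  fixes f :: "nat \<Rightarrow> int"
  assumes "(\<Sum>j=1..g+1. f j) = 0" "j \<in> {1..g+1}"
  shows "BT_int g (\<lambda>i. if i \<in> {1..g} then - f (Suc i) else 0) j = f j"
proof (cases "j = 1")
  case True
  have "(\<Sum>j=1..g+1. f j) = f 1 + (\<Sum>i=1..g. f (Suc i))"
    by (simp add: sum.atLeast_Suc_atMost sum.shift_bounds_cl_Suc_ivl del: sum.cl_ivl_Suc)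
  then show ?thesis unfolding True BT_int_1 using assms(1) by (simp add: sum_negf)
next
  case False
  then obtain i where "j = Suc i" "i \<in> {1..g}" using assms(2) by (cases j) auto
  then show ?thesis by (simp add: BT_int_Suc)
qed

lemma sum_sq_minus_indicator:
  fixes r :: real
  assumes "finite A" "S \<subseteq> A"
  shows "(\<Sum>j\<in>A. (r - of_bool (j \<in> S))\<^sup>2) = card A * r\<^sup>2 - 2 * r * card S + card S"
proof -
  have "(\<Sum>j\<in>A. (r - of_bool (j \<in> S))\<^sup>2) = (\<Sum>j\<in>A. r\<^sup>2 - 2 * r * of_bool (j \<in> S) + of_bool (j \<in> S))"
    by (intro sum.cong) (auto simp: power2_eq_square algebra_simps)
  also have "\<dots> = card A * r\<^sup>2 - 2 * r * (\<Sum>j\<in>A. of_bool (j \<in> S)) + (\<Sum>j\<in>A. of_bool (j \<in> S))"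
    by (simp only: sum.distrib sum_subtractf sum_distrib_left[symmetric] sum_constant)
  also have "(\<Sum>j\<in>A. of_bool (j \<in> S)) = real (card S)"
    using assms by (simp add: Int_absorb1)
  finally show ?thesis .
qed

lemma BT_real_abar:
  assumes "1 \<le> k" "k \<le> g" "j \<in> {1..g+1}"
  shows "BT_real g (abar g k) j = k / (g + 1) - of_bool (j \<le> k)"
proof (cases "j = 1")
  case True
  have "{1..g} = {1..k-1} \<union> {k..g}" "{1..k-1} \<inter> {k..g} = {}" using assms by auto
  moreover have "abar g k i = (real g + 1 - k) / (real g + 1)" if "i \<in> {1..k-1}" for i
    using that by (simp add: abar_def)
  moreover have "abar g k i = - k / (real g + 1)" if "i \<in> {k..g}" for i
  proof -
    have "\<not> i \<le> k - 1" using that assms by auto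
    then show ?thesis by (simp add: abar_def)
  qed
  ultimately have "(\<Sum>i=1..g. abar g k i)
      = (real k - 1) * ((real g + 1 - k) / (real g + 1)) + (real g + 1 - k) * (- k / (real g + 1))"
    using assms by (simp add: sum.union_disjoint of_nat_diff)
  also have "\<dots> = k / (real g + 1) - 1"
    by (simp add: divide_simps) (simp add: algebra_simps)
  finally show ?thesis unfolding True BT_real_1 using assms by simp
next
  case False
  then obtain i where "j = Suc i" "i \<in> {1..g}" using assms(3) by (cases j) auto
  moreover have "i \<le> k - 1 \<longleftrightarrow> Suc i \<le> k" using assms by auto
  ultimately show ?thesis by (auto simp: BT_real_Suc abar_def divide_simps)
qed

lemma svec_abar:
  assumes "1 \<le> k" "k \<le> g" "j \<in> {1..g+1}"
  shows "svec g (abar g k) j = of_bool (j \<le> k)"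
proof -
  have "0 < real k / (real g + 1)" "real k / (real g + 1) < 1" using assms by (simp_all add: field_simps)
  then show ?thesis unfolding svec_def BT_real_abar[OF assms] by auto
qed

lemma M_bases_abar:
  assumes "1 \<le> k" "k \<le> g"
  shows "M_bases g k (abar g k) = {I. I \<subseteq> {1..g+1} \<and> card I = k}"
proof (intro subset_antisym subsetI)
  fix I assume "I \<in> {I. I \<subseteq> {1..g+1} \<and> card I = k}"
  then have I: "I \<subseteq> {1..g+1}" "card I = k" by auto
  define f :: "nat \<Rightarrow> int" where "f j = of_bool (j \<in> I) - of_bool (j \<in> {1..k})" for j
  define c where "c i = (if i \<in> {1..g} then - f (Suc i) else 0)" for i
  have card_eq: "(\<Sum>j=1..g+1. of_bool (j \<in> S)) = int (card S)" if "S \<subseteq> {1..g+1}" for S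
    using that by (simp add: Int_absorb1 del: sum.cl_ivl_Suc)
  have sub: "{1..k} \<subseteq> {1..g+1}" using assms by auto
  then have "(\<Sum>j=1..g+1. f j) = 0"
    unfolding f_def sum_subtractf card_eq[OF I(1)] card_eq[OF sub] using I(2) by simp
  then have BT_c: "BT_int g c j = f j" if "j \<in> {1..g+1}" for j
    using BT_int_preimage[OF _ that] unfolding c_def by blast
  have BT_abar: "BT_real g (abar g k) j = k / (g + 1) - of_bool (j \<in> {1..k})"
    if "j \<in> {1..g+1}" for j
    using BT_real_abar[OF assms that] that by simp
  have "qform g (\<lambda>i. abar g k i - of_int (c i)) = (\<Sum>j=1..g+1. (k / (g + 1) - of_bool (j \<in> I))\<^sup>2)"
    unfolding qform_eq_sum_BT_real_sq BT_real_diff BT_real_of_int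
    by (intro sum.cong refl) (simp add: BT_c BT_abar f_def)
  also have "\<dots> = (\<Sum>j=1..g+1. (k / (g + 1) - of_bool (j \<in> {1..k}))\<^sup>2)"
    unfolding sum_sq_minus_indicator[OF finite_atLeastAtMost I(1)]
      sum_sq_minus_indicator[OF finite_atLeastAtMost sub] using I(2) by simp
  also have "\<dots> = qform g (abar g k)"
    unfolding qform_eq_sum_BT_real_sq by (intro sum.cong refl) (simp add: BT_abar)
  finally have "c \<in> Dset g (abar g k)" unfolding Dset_def by (auto simp: c_def)
  moreover have "BT_int g c i + svec g (abar g k) i = 1" if "i \<in> I" for i
    using that I(1) by (auto simp: BT_c svec_abar[OF assms] f_def)
  ultimately show "I \<in> M_bases g k (abar g k)" unfolding M_bases_def using I by blast
qed (auto simp: M_bases_def)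

lemma cauchy_columns_independent:
  fixes x :: "'a \<Rightarrow> 'b :: field"
  assumes "finite T" "finite S" "card T \<le> card S" "inj_on x (T \<union> S)" "T \<inter> S = {}"
    and rel: "\<forall>s\<in>S. (\<Sum>t\<in>T. u t / (x t - x s)) = 0"
    and "t \<in> T"
  shows "u t = 0"
proof -
  define p where "p = (\<Sum>t\<in>T. smult (u t) (\<Prod>t'\<in>T-{t}. [:x t', -1:]))"
  have poly_p: "poly p y = (\<Sum>t\<in>T. u t * (\<Prod>t'\<in>T-{t}. x t' - y))" for y
    unfolding p_def by (simp add: poly_sum poly_prod)
  have "degree p \<le> card T - 1"
    unfolding p_def
  proof (intro degree_sum_le \<open>finite T\<close>)
    fix t assume "t \<in> T"
    have "degree (\<Prod>t'\<in>T-{t}. [:x t', -1:]) \<le> card (T - {t})"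
      using degree_prod_sum_le[of "T-{t}" "\<lambda>t'. [:x t', -1:]"] \<open>finite T\<close> by (simp add: o_def)
    then show "degree (smult (u t) (\<Prod>t'\<in>T-{t}. [:x t', -1:])) \<le> card T - 1"
      using \<open>t \<in> T\<close> \<open>finite T\<close> by simp
  qed
  then have deg: "degree p < card (x ` S)"
    using assms(1,3,4,7) card_image[of x S] inj_on_subset[of x "T \<union> S" S] card_gt_0_iff[of T]
    by fastforce
  have "poly p (x s) = 0" if "s \<in> S" for s
  proof -
    have nz: "x t - x s \<noteq> 0" if "t \<in> T" for t
      using \<open>s \<in> S\<close> that assms(4,5) by (auto simp: inj_on_def)
    have "u t * (\<Prod>t'\<in>T-{t}. x t' - x s) = (\<Prod>t'\<in>T. x t' - x s) * (u t / (x t - x s))"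
      if "t \<in> T" for t
      using prod.remove[OF \<open>finite T\<close> that, of "\<lambda>t'. x t' - x s"] nz[OF that] by simp
    then have "poly p (x s) = (\<Prod>t'\<in>T. x t' - x s) * (\<Sum>t\<in>T. u t / (x t - x s))"
      unfolding poly_p sum_distrib_left by (intro sum.cong) auto
    then show ?thesis using rel \<open>s \<in> S\<close> by simp
  qed
  then have "p = 0" using deg by (intro poly_eqI_degree[of "x ` S"]) auto
  then have "0 = poly p (x t)" by simp
  also have "\<dots> = u t * (\<Prod>t'\<in>T-{t}. x t' - x t)"
    unfolding poly_p using \<open>finite T\<close> \<open>t \<in> T\<close>
    by (subst sum.remove[of _ t]) (auto intro!: sum.neutral prod_zero)
  finally show ?thesis
    using \<open>finite T\<close> \<open>t \<in> T\<close> assms(4) by (auto simp: inj_on_def)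
qed

lemma Amat_identity_block: "j \<le> k \<Longrightarrow> Amat k \<kappa> \<beta> i j = of_bool (i = j)"
  by (simp add: Amat_def)

lemma Amat_cauchy_form:
  assumes "k \<le> g" "inj_on \<kappa> {1..g+1}" "\<forall>j\<in>{1..g}. \<beta> j \<noteq> 0"
  obtains r c where "\<forall>i\<in>{1..k}. r i \<noteq> 0" "\<forall>j\<in>{k<..g+1}. c j \<noteq> 0"
    "\<forall>i\<in>{1..k}. \<forall>j\<in>{k<..g+1}. Amat k \<kappa> \<beta> i j = r i * c j / (\<kappa> j - \<kappa> i)"
proof
  define b where "b m = (if m = 0 then 1 else \<beta> m)" for m
  define r where "r i = b (i - 1) * (\<Prod>l\<in>{1..k}-{i}. \<kappa> i - \<kappa> l)" for i
  \<comment> \<open>the full product in \<open>c j\<close> absorbs one of the two factors \<open>\<kappa> j - \<kappa> i\<close> of \<open>A\<^sub>i\<^sub>j\<close>\<close>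
  define c where "c j = 1 / (b (j - 1) * (\<Prod>l\<in>{1..k}. \<kappa> j - \<kappa> l))" for j
  have \<kappa>_ne: "\<kappa> i \<noteq> \<kappa> j" if "i \<in> {1..g+1}" "j \<in> {1..g+1}" "i \<noteq> j" for i j
    using assms(2) that by (auto simp: inj_on_def)
  have b_ne: "b m \<noteq> 0" if "m \<le> g" for m
    using assms(3) that by (auto simp: b_def)
  show "\<forall>i\<in>{1..k}. r i \<noteq> 0"
    using assms(1) \<kappa>_ne b_ne by (auto simp: r_def)
  show "\<forall>j\<in>{k<..g+1}. c j \<noteq> 0"
    using assms(1) \<kappa>_ne b_ne by (auto simp: c_def)
  show "\<forall>i\<in>{1..k}. \<forall>j\<in>{k<..g+1}. Amat k \<kappa> \<beta> i j = r i * c j / (\<kappa> j - \<kappa> i)"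
  proof (intro ballI)
    fix i j assume i: "i \<in> {1..k}" and j: "j \<in> {k<..g+1}"
    let ?P = "\<Prod>l\<in>{1..k}-{i}. \<kappa> j - \<kappa> l"
    have "\<kappa> j - \<kappa> i \<noteq> 0" "b (j - 1) \<noteq> 0" "?P \<noteq> 0"
      using i j assms(1) \<kappa>_ne b_ne by auto
    have "Amat k \<kappa> \<beta> i j = b (i - 1) / (b (j - 1) * (\<kappa> j - \<kappa> i)\<^sup>2) *
        ((\<Prod>l\<in>{1..k}-{i}. \<kappa> i - \<kappa> l) / ?P)"
      using i j unfolding Amat_def b_def by (simp add: prod_dividef)
    also have "\<dots> = r i * c j / (\<kappa> j - \<kappa> i)"
      using i \<open>\<kappa> j - \<kappa> i \<noteq> 0\<close> \<open>b (j - 1) \<noteq> 0\<close> \<open>?P \<noteq> 0\<close>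
      unfolding r_def c_def by (simp add: prod.remove power2_eq_square field_simps)
    finally show "Amat k \<kappa> \<beta> i j = r i * c j / (\<kappa> j - \<kappa> i)" .
  qed
qed

lemma Amat_columns_independent:
  assumes "k \<le> g" "inj_on \<kappa> {1..g+1}" "\<forall>j\<in>{1..g}. \<beta> j \<noteq> 0"
    and J: "J \<subseteq> {1..g+1}" "card J \<le> k"
    and rel: "\<forall>i\<in>{1..k}. (\<Sum>j\<in>J. Amat k \<kappa> \<beta> i j * u j) = 0"
  shows "\<forall>j\<in>J. u j = 0"
proof -
  obtain r c where r: "\<forall>i\<in>{1..k}. r i \<noteq> 0" and c: "\<forall>j\<in>{k<..g+1}. c j \<noteq> 0"
    and A: "\<forall>i\<in>{1..k}. \<forall>j\<in>{k<..g+1}. Amat k \<kappa> \<beta> i j = r i * c j / (\<kappa> j - \<kappa> i)"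
    using Amat_cauchy_form[OF assms(1-3)] by blast
  define T where "T = J - {1..k}"
  define S where "S = {1..k} - J"
  have fin: "finite J" using J(1) finite_subset by blast
  have T_sub: "T \<subseteq> {k<..g+1}" using J(1) by (auto simp: T_def)
  have "card T = card J - card (J \<inter> {1..k})"
    unfolding T_def using fin by (simp add: card_Diff_subset_Int)
  moreover have "card S = k - card (J \<inter> {1..k})"
    unfolding S_def by (simp add: card_Diff_subset_Int Int_commute)
  ultimately have "card T \<le> card S" using J(2) by linarith
  have "(\<Sum>t\<in>T. c t * u t / (\<kappa> t - \<kappa> i)) = 0" if "i \<in> S" for i
  proof -
    have "i \<in> {1..k}" "i \<notin> J" using that by (auto simp: S_def)
    have "(\<Sum>j\<in>J. Amat k \<kappa> \<beta> i j * u j) = (\<Sum>j\<in>T. Amat k \<kappa> \<beta> i j * u j)"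
      using fin \<open>i \<notin> J\<close> by (intro sum.mono_neutral_right) (auto simp: T_def Amat_identity_block)
    also have "\<dots> = r i * (\<Sum>t\<in>T. c t * u t / (\<kappa> t - \<kappa> i))"
      unfolding sum_distrib_left using A \<open>i \<in> {1..k}\<close> T_sub
      by (intro sum.cong) (auto simp: subset_iff)
    finally show ?thesis using rel r \<open>i \<in> {1..k}\<close> by simp
  qed
  moreover have "inj_on \<kappa> (T \<union> S)"
    using assms(1) J(1) by (intro inj_on_subset[OF assms(2)]) (auto simp: T_def S_def)
  moreover have "finite T" "finite S" "T \<inter> S = {}" using fin by (auto simp: T_def S_def)
  ultimately have "c t * u t = 0" if "t \<in> T" for t
    using cauchy_columns_independent[of T S \<kappa> "\<lambda>t. c t * u t" t] \<open>card T \<le> card S\<close> that by blast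
  then have u_T: "u t = 0" if "t \<in> T" for t
    using c T_sub that by auto
  show ?thesis
  proof
    fix i assume "i \<in> J"
    show "u i = 0"
    proof (cases "i \<in> T")
      case False
      then have "i \<in> {1..k}" using \<open>i \<in> J\<close> by (auto simp: T_def)
      have "Amat k \<kappa> \<beta> i j * u j = (if j = i then u j else 0)" if "j \<in> J" for j
      proof (cases "j \<in> T")
        case False
        then have "j \<le> k" using \<open>j \<in> J\<close> J(1) by (auto simp: T_def)
        then show ?thesis by (simp add: Amat_identity_block)
      qed (use u_T \<open>i \<notin> T\<close> in auto)
      then have "(\<Sum>j\<in>J. Amat k \<kappa> \<beta> i j * u j) = (\<Sum>j\<in>J. if j = i then u j else 0)"
        by (rule sum.cong[OF refl])
      then show ?thesis using rel \<open>i \<in> {1..k}\<close> \<open>i \<in> J\<close> fin by simp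
    qed (use u_T in blast)
  qed
qed

lemma det_minor_mat_neq_0:
  assumes "finite J" "card J = k"
    and indep: "\<And>u. \<forall>i\<in>{1..k}. (\<Sum>j\<in>J. A i j * u j) = 0 \<Longrightarrow> \<forall>j\<in>J. u j = 0"
  shows "det (minor_mat k A J) \<noteq> 0"
proof
  assume "det (minor_mat k A J) = 0"
  then obtain v where v: "v \<in> carrier_vec k" "v \<noteq> 0\<^sub>v k" "minor_mat k A J *\<^sub>v v = 0\<^sub>v k"
    using det_0_iff_vec_prod_zero[of "minor_mat k A J" k] by (auto simp: minor_mat_def)
  define js where "js = sorted_list_of_set J"
  have bij: "bij_betw ((!) js) {..<k} J"
    using assms(1,2) unfolding js_def by (intro bij_betw_nth) auto
  define u where "u j = v $ inv_into {..<k} ((!) js) j" for j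
  have u_js: "u (js ! c) = v $ c" if "c < k" for c
    using bij that by (simp add: u_def bij_betw_def inv_into_f_f)
  have "(\<Sum>j\<in>J. A i j * u j) = 0" if "i \<in> {1..k}" for i
  proof -
    have "i - 1 < k" using that by auto
    have "(\<Sum>j\<in>J. A i j * u j) = (\<Sum>c<k. A i (js ! c) * v $ c)"
      using u_js by (simp add: sum.reindex_bij_betw[OF bij, symmetric])
    also have "\<dots> = (minor_mat k A J *\<^sub>v v) $ (i - 1)"
      using that v(1) \<open>i - 1 < k\<close> unfolding minor_mat_def js_def
      by (simp add: index_mult_mat_vec scalar_prod_def lessThan_atLeast0 row_def)
    finally show ?thesis using v(3) \<open>i - 1 < k\<close> by simp
  qed
  then have "\<forall>j\<in>J. u j = 0" using indep by blast
  then have "v = 0\<^sub>v k"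
    using v(1) u_js bij by (intro eq_vecI) (auto simp: bij_betw_def)
  with v(2) show False ..
qed

lemma matrix_matroid_bases_Amat:
  assumes "k \<le> g" "inj_on \<kappa> {1..g+1}" "\<forall>j\<in>{1..g}. \<beta> j \<noteq> 0"
  shows "matrix_matroid_bases k (g+1) (Amat k \<kappa> \<beta>) = {J. J \<subseteq> {1..g+1} \<and> card J = k}"
  unfolding matrix_matroid_bases_def
  using det_minor_mat_neq_0 Amat_columns_independent[OF assms] finite_subset[of _ "{1..g+1}"]
  by fastforce

theorem corollary5p4:
  fixes g k :: nat and \<kappa> \<beta> :: "nat \<Rightarrow> complex"
  assumes "g \<ge> 1"
    and "1 \<le> k" and "k \<le> g"
    and "inj_on \<kappa> {1..g+1}"
    and "\<forall>j\<in>{1..g}. \<beta> j \<noteq> 0"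
  shows "matrix_matroid_bases k (g+1) (Amat k \<kappa> \<beta>) = M_bases g k (abar g k)"
  using matrix_matroid_bases_Amat[OF assms(3-5)] M_bases_abar[OF assms(2,3)] by simp

end
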